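(* In the multi-sender unicast index-coding instance with $N=4$ messages, $K=15$ senders whose message sets are all $15$ nonempty subsets of $\{1,2,3,4\}$, each with link capacity $1$, and side information $\mathcal A_1=\{4\}$, $\mathcal A_2=\{3,4\}$, $\mathcal A_3=\{1,2\}$, $\mathcal A_4=\{2,3\}$, every achievable rate tuple satisfies $R_1+R_2+R_3\le 18$.
   Context: Model. $N$ independent messages $M_1,\dots,M_N$, $M_j$ uniform on $[1:2^{nR_j}]$ ($n$ the block length). Sender $k$ knows the messages $M_i$, $i\in\mathcal S_k$, and sends an index $L_k=f_k((M_i)_{i\in\mathcal S_k})\in[1:2^{nC_k})=\{1,\dots,2^{\lfloor nC_k\rfloor}\}$ over a noiseless broadcast link reaching all receivers. Receiver $j$ knows $M_i$, $i\in\mathcal A_j$, and must output an estimate $\hat M_j=g_j(L_1,\dots,L_K,(M_i)_{i\in\mathcal A_j})$ of $M_j$. A rate tuple is achievable if there exist such codes with $\Pr[(\hat M_1,\dots,\hat M_N)\ne(M_1,\dots,M_N)]\to0$ as $n\to\infty$. *)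

theory Defs
  imports Complex_Main "HOL-Library.FuncSet"
begin

text \<open>Messages are indexed by 1..N, senders by 1..K.
  Sender k knows the messages in S k and has link capacity C k; receiver j knows the
  messages in A j and wants message j.\<close>

definition msg_tuples :: "nat \<Rightarrow> (nat \<Rightarrow> real) \<Rightarrow> nat \<Rightarrow> (nat \<Rightarrow> nat) set" where
  "msg_tuples N R n = PiE {1..N} (\<lambda>j. {1..nat \<lceil>2 powr (real n * R j)\<rceil>})"

text \<open>A code of block length n: encoders f k and decoders g j, with the required
  information constraints and index ranges [1:2^(n C_k)) = {1,...,2^floor(n C_k)}.\<close>

definition valid_code ::
  "nat \<Rightarrow> nat \<Rightarrow> (nat \<Rightarrow> nat set) \<Rightarrow> (nat \<Rightarrow> real) \<Rightarrow> (nat \<Rightarrow> nat set) \<Rightarrow>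
   (nat \<Rightarrow> real) \<Rightarrow> nat \<Rightarrow>
   (nat \<Rightarrow> (nat \<Rightarrow> nat) \<Rightarrow> nat) \<Rightarrow> (nat \<Rightarrow> (nat \<Rightarrow> nat) \<Rightarrow> (nat \<Rightarrow> nat) \<Rightarrow> nat) \<Rightarrow> bool" where
  "valid_code N K S C A R n f g \<longleftrightarrow>
     (\<forall>k\<in>{1..K}. \<forall>m\<in>msg_tuples N R n. f k m \<in> {1..2 ^ nat \<lfloor>real n * C k\<rfloor>}) \<and>
     (\<forall>k\<in>{1..K}. \<forall>m\<in>msg_tuples N R n. \<forall>m'\<in>msg_tuples N R n.
        (\<forall>i\<in>S k. m i = m' i) \<longrightarrow> f k m = f k m') \<and>
     (\<forall>j\<in>{1..N}. \<forall>L. \<forall>m\<in>msg_tuples N R n. \<forall>m'\<in>msg_tuples N R n.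
        (\<forall>i\<in>A j. m i = m' i) \<longrightarrow> g j L m = g j L m')"

text \<open>The broadcast indices seen by every receiver (only the K senders' indices).\<close>
definition sent :: "nat \<Rightarrow> (nat \<Rightarrow> (nat \<Rightarrow> nat) \<Rightarrow> nat) \<Rightarrow> (nat \<Rightarrow> nat) \<Rightarrow> nat \<Rightarrow> nat" where
  "sent K f m = (\<lambda>k. if k \<in> {1..K} then f k m else 0)"

text \<open>Error probability under independent uniform messages (counting measure).\<close>
definition err_prob ::
  "nat \<Rightarrow> nat \<Rightarrow> (nat \<Rightarrow> real) \<Rightarrow> nat \<Rightarrow>
   (nat \<Rightarrow> (nat \<Rightarrow> nat) \<Rightarrow> nat) \<Rightarrow> (nat \<Rightarrow> (nat \<Rightarrow> nat) \<Rightarrow> (nat \<Rightarrow> nat) \<Rightarrow> nat) \<Rightarrow> real" where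
  "err_prob N K R n f g =
     real (card {m \<in> msg_tuples N R n. \<exists>j\<in>{1..N}. g j (sent K f m) m \<noteq> m j})
     / real (card (msg_tuples N R n))"

definition achievable ::
  "nat \<Rightarrow> nat \<Rightarrow> (nat \<Rightarrow> nat set) \<Rightarrow> (nat \<Rightarrow> real) \<Rightarrow> (nat \<Rightarrow> nat set) \<Rightarrow> (nat \<Rightarrow> real) \<Rightarrow> bool" where
  "achievable N K S C A R \<longleftrightarrow>
     (\<exists>f g. (\<forall>n. valid_code N K S C A R n (f n) (g n)) \<and>
            (\<lambda>n. err_prob N K R n (f n) (g n)) \<longlonglongrightarrow> 0)"

end

theory Submission
  imports Defs
begin

text \<open>Fix a code of block length n with error probability below 1/4, and let q = 2^n be the
  size of each broadcast index.  Call a decodable message tuple m heavy if more than 4q^4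
  values x of M2 leave the indices of all senders ignorant of M3 unchanged when substituted
  into m.  A heavy tuple is determined by (m1, m3, m4), those indices and the four indices of
  the senders knowing both M2 and M3 (receiver 2 then recovers m2); since each heavy fibre
  has more than 4q^4 points, at most a quarter of all tuples are heavy.  A light tuple is
  determined by m4, the 14 indices of the senders other than the one knowing only M4, and one
  of at most 4q^4 values of m2 (receiver 1 recovers m1, receiver 3 then m3), so there are at
  most 4q^18 |M4| of them.  As more than three quarters of all tuples decode correctly,
  |M1||M2||M3| < 8q^18, i.e. n(R1+R2+R3) < 18n + 3 for all large n.\<close>

lemma heavy_fibres_subset_image: "{y. c < card {x\<in>D. h x = y}} \<subseteq> h ` D"
proof
  fix y assume "y \<in> {y. c < card {x\<in>D. h x = y}}"
  then have "{x\<in>D. h x = y} \<noteq> {}"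
    by (metis (no_types, lifting) card.empty mem_Collect_eq not_less_zero)
  then show "y \<in> h ` D"
    by blast
qed

lemma card_heavy_fibres_mult_le:
  fixes h :: "'a \<Rightarrow> 'b"
  assumes "finite D"
  shows "card {y. c < card {x\<in>D. h x = y}} * c \<le> card D"
proof -
  let ?B = "{y. c < card {x\<in>D. h x = y}}"
  have fin_B: "finite ?B"
    using heavy_fibres_subset_image[of c D h] assms finite_surj by blast
  have "card ?B * c = (\<Sum>y\<in>?B. c)"
    by simp
  also have "\<dots> \<le> (\<Sum>y\<in>?B. card {x\<in>D. h x = y})"
    by (rule sum_mono) simp
  also have "\<dots> = card (\<Union>y\<in>?B. {x\<in>D. h x = y})"
    by (rule card_UN_disjoint[symmetric]) (use fin_B assms in auto)
  also have "\<dots> \<le> card D"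
    by (rule card_mono) (use assms in auto)
  finally show ?thesis .
qed

lemma card_le_mult_card_image_if_fibres_embed:
  fixes Y :: "'a \<Rightarrow> 'b" and p :: "'a \<Rightarrow> 'c"
  assumes "finite G"
    and "\<And>m. m \<in> G \<Longrightarrow> finite (F m) \<and> card (F m) \<le> c"
    and "\<And>m m'. m \<in> G \<Longrightarrow> m' \<in> G \<Longrightarrow> Y m = Y m' \<Longrightarrow> p m' \<in> F m"
    and "\<And>m m'. m \<in> G \<Longrightarrow> m' \<in> G \<Longrightarrow> Y m = Y m' \<Longrightarrow> p m = p m' \<Longrightarrow> m = m'"
  shows "card G \<le> c * card (Y ` G)"
proof -
  have fibre: "card {m\<in>G. Y m = y} \<le> c" if y: "y \<in> Y ` G" for y
  proof -
    obtain m0 where m0: "m0 \<in> G" "Y m0 = y"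
      using y by blast
    have "inj_on p {m\<in>G. Y m = y}"
      by (rule inj_onI) (use assms(4) in auto)
    moreover have "p ` {m\<in>G. Y m = y} \<subseteq> F m0"
      using assms(3) m0 by auto
    ultimately have "card {m\<in>G. Y m = y} \<le> card (F m0)"
      using assms(2)[OF m0(1)] by (meson card_inj_on_le)
    then show ?thesis
      using assms(2)[OF m0(1)] by linarith
  qed
  have "G = (\<Union>y\<in>Y ` G. {m\<in>G. Y m = y})"
    by auto
  then have "card G \<le> (\<Sum>y\<in>Y ` G. card {m\<in>G. Y m = y})"
    using card_UN_le[of "Y ` G" "\<lambda>y. {m\<in>G. Y m = y}"] assms(1) by simp
  also have "\<dots> \<le> (\<Sum>y\<in>Y ` G. c)"
    by (rule sum_mono) (rule fibre)
  finally show ?thesis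
    by (simp add: mult.commute)
qed

lemma restrict_remove_fun_upd:
  assumes "m \<in> PiE I D"
  shows "(restrict m (I - {i}))(i := x) = m(i := x)"
proof
  fix j show "((restrict m (I - {i}))(i := x)) j = (m(i := x)) j"
    using assms by (cases "j \<in> I") (auto simp: PiE_def extensional_def)
qed

lemma sum_card_heavy_line_fibres_mult_le:
  assumes "finite I" "\<And>j. finite (D j)" "i \<in> I"
  shows "(\<Sum>r\<in>PiE (I - {i}) D. card {w. c < card {x\<in>D i. W (r(i := x)) = w}}) * c
    \<le> card (PiE I D)"
proof -
  let ?P = "PiE (I - {i}) D"
  have "(\<Sum>r\<in>?P. card {w. c < card {x\<in>D i. W (r(i := x)) = w}}) * c
      = (\<Sum>r\<in>?P. card {w. c < card {x\<in>D i. W (r(i := x)) = w}} * c)"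
    by (rule sum_distrib_right)
  also have "\<dots> \<le> (\<Sum>r\<in>?P. card (D i))"
    by (rule sum_mono) (rule card_heavy_fibres_mult_le[OF assms(2)])
  also have "\<dots> = card (PiE I D)"
    using assms by (simp add: card_PiE prod.remove mult.commute)
  finally show ?thesis .
qed

text \<open>L injects into triples (other coordinates, W-value, V-value), and on each coordinate-i
  line at most |D i| / c values of W have fibres with more than c points.\<close>

lemma card_mult_le_if_heavy_line_fibres:
  fixes W :: "('i \<Rightarrow> 'a) \<Rightarrow> 'w" and V :: "('i \<Rightarrow> 'a) \<Rightarrow> 'v"
  assumes fin: "finite I" "\<And>j. finite (D j)" and i: "i \<in> I"
    and V: "finite VS" "\<And>m. m \<in> L \<Longrightarrow> V m \<in> VS"
    and L: "L \<subseteq> PiE I D"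
    and inj: "\<And>m m'. m \<in> L \<Longrightarrow> m' \<in> L \<Longrightarrow> (\<forall>j\<in>I - {i}. m j = m' j) \<Longrightarrow>
                W m = W m' \<Longrightarrow> V m = V m' \<Longrightarrow> m = m'"
    and heavy: "\<And>m. m \<in> L \<Longrightarrow> c < card {x\<in>D i. W (m(i := x)) = W m}"
  shows "card L * c \<le> card VS * card (PiE I D)"
proof -
  define B where "B r = {w. c < card {x\<in>D i. W (r(i := x)) = w}}" for r
  define \<phi> where "\<phi> m = (restrict m (I - {i}), W m, V m)" for m
  let ?P = "PiE (I - {i}) D"
  have fin_B: "finite (B r)" for r
    using heavy_fibres_subset_image[of c "D i" "\<lambda>x. W (r(i := x))"] fin(2)[of i] finite_surj
    unfolding B_def by blast
  have fin_P: "finite ?P"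
    using fin by (simp add: finite_PiE)
  have "inj_on \<phi> L"
  proof (rule inj_onI)
    fix m m' assume "m \<in> L" "m' \<in> L" "\<phi> m = \<phi> m'"
    then show "m = m'"
      using inj[of m m'] unfolding \<phi>_def by (metis prod.inject restrict_apply')
  qed
  moreover have "\<phi> m \<in> Sigma ?P (\<lambda>r. B r \<times> VS)" if m: "m \<in> L" for m
  proof -
    have "m \<in> PiE I D"
      using m L by blast
    then have "restrict m (I - {i}) \<in> ?P" and "W m \<in> B (restrict m (I - {i}))"
      using heavy[OF m] restrict_remove_fun_upd[of m] by (auto simp: B_def)
    then show ?thesis
      using m V(2) by (simp add: \<phi>_def)
  qed
  ultimately have "card L \<le> card (Sigma ?P (\<lambda>r. B r \<times> VS))"
    using card_mono[of "Sigma ?P (\<lambda>r. B r \<times> VS)" "\<phi> ` L"] fin_P fin_B V(1)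
    by (auto simp: card_image)
  also have "\<dots> = (\<Sum>r\<in>?P. card (B r)) * card VS"
    using fin_P fin_B V(1) by (simp add: card_cartesian_product sum_distrib_right)
  finally have "card L * c \<le> (\<Sum>r\<in>?P. card (B r)) * c * card VS"
    by (metis mult.commute mult.left_commute mult_le_mono1)
  also have "\<dots> \<le> card (PiE I D) * card VS"
    unfolding B_def by (rule mult_le_mono1[OF sum_card_heavy_line_fibres_mult_le[OF fin i]])
  finally show ?thesis
    by (simp add: mult.commute)
qed

lemma card_bij_betw_supersets_le:
  assumes "bij_betw S K {T. T \<subseteq> U \<and> T \<noteq> {}}" and "finite U"
  shows "card {k\<in>K. X \<subseteq> S k} \<le> card (Pow (U - X))"
proof -
  let ?K = "{k\<in>K. X \<subseteq> S k}"
  have "inj_on S ?K"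
    using bij_betw_imp_inj_on[OF assms(1)] by (rule inj_on_subset) auto
  then have "card ?K = card (S ` ?K)"
    by (rule card_image[symmetric])
  also have "\<dots> \<le> card ((\<lambda>V. V \<union> X) ` Pow (U - X))"
  proof (rule card_mono)
    show "finite ((\<lambda>V. V \<union> X) ` Pow (U - X))"
      using assms(2) by simp
    show "S ` ?K \<subseteq> (\<lambda>V. V \<union> X) ` Pow (U - X)"
    proof
      fix T assume "T \<in> S ` ?K"
      then obtain k where "k \<in> K" "X \<subseteq> S k" "T = S k"
        by blast
      then have "T \<subseteq> U" "X \<subseteq> T"
        using bij_betw_apply[OF assms(1), of k] by auto
      then have "T = (T - X) \<union> X" and "T - X \<in> Pow (U - X)"
        by auto
      then show "T \<in> (\<lambda>V. V \<union> X) ` Pow (U - X)"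
        by blast
    qed
  qed
  also have "\<dots> \<le> card (Pow (U - X))"
    by (rule card_image_le) (use assms(2) in simp)
  finally show ?thesis .
qed

lemma card_bij_betw_neq:
  assumes "bij_betw S K F" and "finite K" and "T \<in> F"
  shows "card {k\<in>K. S k \<noteq> T} = card K - 1"
proof -
  obtain k0 where k0: "k0 \<in> K" "S k0 = T"
    using assms(1,3) unfolding bij_betw_def by blast
  have "{k\<in>K. S k \<noteq> T} = K - {k0}"
    using k0 bij_betw_imp_inj_on[OF assms(1)] by (auto dest: inj_onD)
  then show ?thesis
    using k0(1) assms(2) by simp
qed

definition side_info :: "nat \<Rightarrow> nat set" where
  "side_info = (\<lambda>j. if j = 1 then {4} else if j = 2 then {3,4} else if j = 3 then {1,2} else {2,3})"

locale full_senders_code =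
  fixes S :: "nat \<Rightarrow> nat set" and R :: "nat \<Rightarrow> real" and n :: nat
    and f :: "nat \<Rightarrow> (nat \<Rightarrow> nat) \<Rightarrow> nat"
    and g :: "nat \<Rightarrow> (nat \<Rightarrow> nat) \<Rightarrow> (nat \<Rightarrow> nat) \<Rightarrow> nat"
  assumes senders: "bij_betw S {1..15} {T. T \<subseteq> {1..4} \<and> T \<noteq> {}}"
    and code: "valid_code 4 15 S (\<lambda>k. 1) side_info R n f g"
begin

definition msg_size :: "nat \<Rightarrow> nat" where
  "msg_size j = nat \<lceil>2 powr (real n * R j)\<rceil>"

abbreviation msgs :: "(nat \<Rightarrow> nat) set" where
  "msgs \<equiv> msg_tuples 4 R n"

lemma msgs_eq: "msgs = PiE {1..4} (\<lambda>j. {1..msg_size j})"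
  by (simp add: msg_tuples_def msg_size_def)

lemma finite_msgs: "finite msgs"
  by (simp add: msgs_eq finite_PiE)

lemma msg_size_pos: "0 < msg_size j"
  by (simp add: msg_size_def)

lemma card_msgs: "card msgs = msg_size 1 * msg_size 2 * msg_size 3 * msg_size 4"
proof -
  have "{1..4::nat} = {1, 2, 3, 4}"
    by auto
  then show ?thesis
    by (simp add: msgs_eq card_PiE)
qed

lemma msgs_mem: "m \<in> msgs \<Longrightarrow> j \<in> {1..4} \<Longrightarrow> m j \<in> {1..msg_size j}"
  unfolding msgs_eq by (rule PiE_mem)

lemma msgs_eqI:
  assumes "m \<in> msgs" "m' \<in> msgs" "m 1 = m' 1" "m 2 = m' 2" "m 3 = m' 3" "m 4 = m' 4"
  shows "m = m'"
proof (rule PiE_ext)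
  show "m \<in> PiE {1..4} (\<lambda>j. {1..msg_size j})" "m' \<in> PiE {1..4} (\<lambda>j. {1..msg_size j})"
    using assms(1,2) by (simp_all add: msgs_eq)
  fix i :: nat assume "i \<in> {1..4}"
  then have "i = 1 \<or> i = 2 \<or> i = 3 \<or> i = 4"
    by auto
  then show "m i = m' i"
    using assms(3-6) by auto
qed

lemma msgs_upd_2:
  assumes "m \<in> msgs" "m' \<in> msgs"
  shows "m(2 := m' 2) \<in> msgs"
proof -
  have "m' 2 \<in> {1..msg_size 2}"
    using msgs_mem[OF assms(2), of 2] by simp
  then have "m(2 := m' 2) \<in> PiE (insert 2 {1..4}) (\<lambda>j. {1..msg_size j})"
    using assms(1) by (intro PiE_fun_upd) (simp_all add: msgs_eq)
  then show ?thesis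
    by (simp add: msgs_eq insert_absorb)
qed

lemma index_range:
  assumes "k \<in> {1..15}" "m \<in> msgs"
  shows "f k m \<in> {1..2 ^ n}"
proof -
  have "\<forall>k\<in>{1..15}. \<forall>m\<in>msgs. f k m \<in> {1..2 ^ nat \<lfloor>real n * 1\<rfloor>}"
    using code unfolding valid_code_def by (elim conjE) assumption
  then show ?thesis
    using assms by simp
qed

lemma index_local:
  assumes "k \<in> {1..15}" "m \<in> msgs" "m' \<in> msgs" "\<forall>i\<in>S k. m i = m' i"
  shows "f k m = f k m'"
proof -
  have "\<forall>k\<in>{1..15}. \<forall>m\<in>msgs. \<forall>m'\<in>msgs. (\<forall>i\<in>S k. m i = m' i) \<longrightarrow> f k m = f k m'"
    using code unfolding valid_code_def by (elim conjE) assumption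
  then show ?thesis
    using assms by blast
qed

lemma decoder_local:
  assumes "j \<in> {1..4}" "m \<in> msgs" "m' \<in> msgs" "\<forall>i\<in>side_info j. m i = m' i"
  shows "g j L m = g j L m'"
proof -
  have "\<forall>j\<in>{1..4}. \<forall>L. \<forall>m\<in>msgs. \<forall>m'\<in>msgs. (\<forall>i\<in>side_info j. m i = m' i) \<longrightarrow>
      g j L m = g j L m'"
    using code unfolding valid_code_def by (elim conjE) assumption
  then show ?thesis
    using assms by blast
qed

definition decoded :: "(nat \<Rightarrow> nat) set" where
  "decoded = {m\<in>msgs. \<forall>j\<in>{1..4}. g j (sent 15 f m) m = m j}"

lemma decoded_subset: "decoded \<subseteq> msgs"
  by (auto simp: decoded_def)

lemma err_prob_eq: "err_prob 4 15 R n f g = real (card (msgs - decoded)) / real (card msgs)"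
proof -
  have "{m\<in>msgs. \<exists>j\<in>{1..4}. g j (sent 15 f m) m \<noteq> m j} = msgs - decoded"
    by (auto simp: decoded_def)
  then show ?thesis
    by (simp add: err_prob_def)
qed

lemma decoded_agree:
  assumes "m \<in> decoded" "m' \<in> decoded" "j \<in> {1..4}"
    and "\<forall>k\<in>{1..15}. f k m = f k m'" and "\<forall>i\<in>side_info j. m i = m' i"
  shows "m j = m' j"
proof -
  have "sent 15 f m = sent 15 f m'"
    using assms(4) by (auto simp: sent_def)
  moreover have "g j (sent 15 f m') m = g j (sent 15 f m') m'"
    using decoder_local[OF assms(3) _ _ assms(5)] assms(1,2) decoded_subset by blast
  ultimately show ?thesis
    using assms(1-3) by (simp add: decoded_def)
qed

definition indices :: "nat set \<Rightarrow> (nat \<Rightarrow> nat) \<Rightarrow> nat \<Rightarrow> nat" where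
  "indices K m = restrict (\<lambda>k. f k m) K"

lemma indices_eqD: "indices K m = indices K m' \<Longrightarrow> k \<in> K \<Longrightarrow> f k m = f k m'"
  by (metis indices_def restrict_apply')

lemma indices_eqI: "(\<And>k. k \<in> K \<Longrightarrow> f k m = f k m') \<Longrightarrow> indices K m = indices K m'"
  unfolding indices_def by (rule restrict_ext)

lemma indices_in_PiE: "K \<subseteq> {1..15} \<Longrightarrow> m \<in> msgs \<Longrightarrow> indices K m \<in> PiE K (\<lambda>_. {1..2 ^ n})"
  using index_range by (auto simp: indices_def)

definition blind3 :: "nat set" where
  "blind3 = {k\<in>{1..15}. 3 \<notin> S k}"

definition knows23 :: "nat set" where
  "knows23 = {k\<in>{1..15}. {2, 3} \<subseteq> S k}"

definition not_only4 :: "nat set" where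
  "not_only4 = {k\<in>{1..15}. S k \<noteq> {4}}"

lemma sender_subset: "k \<in> {1..15} \<Longrightarrow> S k \<subseteq> {1, 2, 3, 4}"
  using bij_betw_apply[OF senders] atLeastAtMost_iff by fastforce

lemma card_knows23: "card knows23 \<le> 4"
proof -
  have "card knows23 \<le> card (Pow ({1..4::nat} - {2, 3}))"
    unfolding knows23_def by (rule card_bij_betw_supersets_le[OF senders]) simp
  also have "{1..4::nat} - {2, 3} = {1, 4}"
    by auto
  finally show ?thesis
    by (simp add: card_Pow)
qed

lemma card_not_only4: "card not_only4 = 14"
  unfolding not_only4_def by (subst card_bij_betw_neq[OF senders]) auto

lemma indices_blind3_eq:
  assumes "m \<in> msgs" "m' \<in> msgs" "m 1 = m' 1" "m 2 = m' 2" "m 4 = m' 4"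
  shows "indices blind3 m = indices blind3 m'"
proof -
  have "f k m = f k m'" if k: "k \<in> blind3" for k
  proof (rule index_local)
    show "k \<in> {1..15}"
      using k by (simp add: blind3_def)
    have "S k \<subseteq> {1, 2, 4}"
      using k sender_subset by (auto simp: blind3_def)
    then show "\<forall>i\<in>S k. m i = m' i"
      using assms(3-5) by auto
  qed (use assms in auto)
  then show ?thesis
    by (rule indices_eqI)
qed

text \<open>A sender outside blind3 and knows23 knows M3 but not M2, so it only sees m1, m3, m4.\<close>

lemma indices_eq_if_blind3_knows23:
  assumes "m \<in> msgs" "m' \<in> msgs" "m 1 = m' 1" "m 3 = m' 3" "m 4 = m' 4"
    and "indices blind3 m = indices blind3 m'" "indices knows23 m = indices knows23 m'"
  shows "\<forall>k\<in>{1..15}. f k m = f k m'"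
proof
  fix k :: nat assume k: "k \<in> {1..15}"
  consider "k \<in> blind3" | "k \<in> knows23" | "S k \<subseteq> {1, 3, 4}"
    using k sender_subset[OF k] by (auto simp: blind3_def knows23_def)
  then show "f k m = f k m'"
  proof cases
    case 3
    then show ?thesis
      using index_local[OF k assms(1,2)] assms(3-5) by auto
  qed (use indices_eqD assms(6,7) in blast)+
qed

lemma decoded_eq_if_blind3_knows23:
  assumes "m \<in> decoded" "m' \<in> decoded" "m 1 = m' 1" "m 3 = m' 3" "m 4 = m' 4"
    and "indices blind3 m = indices blind3 m'" "indices knows23 m = indices knows23 m'"
  shows "m = m'"
proof -
  have ms: "m \<in> msgs" "m' \<in> msgs"
    using assms(1,2) decoded_subset by auto
  have "m 2 = m' 2"
    using decoded_agree[OF assms(1,2), of 2] indices_eq_if_blind3_knows23[OF ms assms(3-7)] assms(4,5)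
    by (simp add: side_info_def)
  then show ?thesis
    using msgs_eqI[OF ms] assms(3-5) by simp
qed

text \<open>The sender knowing only M4 sends a function of m4, so this pair determines every
  broadcast index.\<close>

definition receiver1_view :: "(nat \<Rightarrow> nat) \<Rightarrow> nat \<times> (nat \<Rightarrow> nat)" where
  "receiver1_view m = (m 4, indices not_only4 m)"

lemma indices_eq_if_receiver1_view_eq:
  assumes "m \<in> msgs" "m' \<in> msgs" "receiver1_view m = receiver1_view m'"
  shows "\<forall>k\<in>{1..15}. f k m = f k m'"
proof
  fix k :: nat assume k: "k \<in> {1..15}"
  have views: "m 4 = m' 4" "indices not_only4 m = indices not_only4 m'"
    using assms(3) by (simp_all add: receiver1_view_def)
  show "f k m = f k m'"
  proof (cases "S k = {4}")
    case True
    then show ?thesis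
      using index_local[OF k assms(1,2)] views(1) by simp
  next
    case False
    then show ?thesis
      using k indices_eqD[OF views(2)] by (simp add: not_only4_def)
  qed
qed

lemma decoded_agree_1:
  assumes "m \<in> decoded" "m' \<in> decoded" "receiver1_view m = receiver1_view m'"
  shows "m 1 = m' 1"
proof -
  have "\<forall>k\<in>{1..15}. f k m = f k m'"
    using indices_eq_if_receiver1_view_eq assms decoded_subset by blast
  moreover have "\<forall>i\<in>side_info 1. m i = m' i"
    using assms(3) by (simp add: side_info_def receiver1_view_def)
  ultimately show ?thesis
    using decoded_agree[OF assms(1,2)] by simp
qed

lemma card_receiver1_view_image:
  assumes "A \<subseteq> msgs"
  shows "card (receiver1_view ` A) \<le> msg_size 4 * 2 ^ (14 * n)"
proof -
  have sub: "not_only4 \<subseteq> {1..15}"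
    by (auto simp: not_only4_def)
  then have fin: "finite not_only4"
    using finite_subset by blast
  let ?V = "{1..msg_size 4} \<times> PiE not_only4 (\<lambda>_. {1..2 ^ n :: nat})"
  have "receiver1_view m \<in> ?V" if "m \<in> msgs" for m
    using msgs_mem[OF that, of 4] indices_in_PiE[OF sub that] by (simp add: receiver1_view_def)
  then have "receiver1_view ` A \<subseteq> ?V"
    using assms by blast
  then have "card (receiver1_view ` A) \<le> card ?V"
    by (rule card_mono[rotated]) (simp add: finite_PiE fin)
  also have "\<dots> = msg_size 4 * (2 ^ n) ^ 14"
    using card_not_only4 by (simp add: card_cartesian_product card_PiE fin)
  finally show ?thesis
    by (simp add: power_mult[symmetric] mult.commute)
qed

definition confusable :: "(nat \<Rightarrow> nat) \<Rightarrow> nat set" where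
  "confusable m = {x\<in>{1..msg_size 2}. indices blind3 (m(2 := x)) = indices blind3 m}"

definition heavy :: "(nat \<Rightarrow> nat) set" where
  "heavy = {m\<in>decoded. 4 * 2 ^ (4 * n) < card (confusable m)}"

lemma card_heavy: "4 * card heavy \<le> card msgs"
proof -
  let ?VS = "PiE knows23 (\<lambda>_. {1..2 ^ n :: nat})"
  have fin_knows23: "finite knows23"
    by (simp add: knows23_def)
  have "card ?VS \<le> 2 ^ (4 * n)"
    using card_knows23 by (simp add: card_PiE fin_knows23 power_mult mult.commute power_increasing)
  have "card heavy * (4 * 2 ^ (4 * n)) \<le> card ?VS * card msgs"
    unfolding msgs_eq
  proof (rule card_mult_le_if_heavy_line_fibres[where i = 2 and W = "indices blind3"
        and V = "indices knows23"])
    show "finite ?VS"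
      by (simp add: fin_knows23 finite_PiE)
    show "indices knows23 m \<in> ?VS" if "m \<in> heavy" for m
      using that decoded_subset by (intro indices_in_PiE) (auto simp: heavy_def knows23_def)
    show "heavy \<subseteq> PiE {1..4} (\<lambda>j. {1..msg_size j})"
      using decoded_subset by (auto simp: heavy_def msgs_eq)
    show "m = m'" if "m \<in> heavy" "m' \<in> heavy" "\<forall>j\<in>{1..4} - {2}. m j = m' j"
      "indices blind3 m = indices blind3 m'" "indices knows23 m = indices knows23 m'" for m m'
    proof (rule decoded_eq_if_blind3_knows23)
      show "m \<in> decoded" "m' \<in> decoded"
        using that(1,2) by (simp_all add: heavy_def)
      show "m 1 = m' 1" "m 3 = m' 3" "m 4 = m' 4"
        using that(3) by simp_all
    qed (use that in simp_all)
    show "4 * 2 ^ (4 * n) < card {x\<in>{1..msg_size 2}. indices blind3 (m(2 := x)) = indices blind3 m}"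
      if "m \<in> heavy" for m
      using that by (simp add: heavy_def confusable_def)
  qed simp_all
  with \<open>card ?VS \<le> 2 ^ (4 * n)\<close> have "card heavy * (4 * 2 ^ (4 * n)) \<le> 2 ^ (4 * n) * card msgs"
    by (meson le_trans mult_le_mono1)
  then show ?thesis
    by (simp add: algebra_simps)
qed

text \<open>Two tuples with the same receiver-1 view share m1, m4 and all indices, so m'2 is
  confusable with m; given m2, receiver 3 then recovers m3.\<close>

lemma card_light_le_image:
  "card (decoded - heavy) \<le> 4 * 2 ^ (4 * n) * card (receiver1_view ` (decoded - heavy))"
proof (rule card_le_mult_card_image_if_fibres_embed[where p = "\<lambda>m. m 2" and F = confusable])
  show "finite (decoded - heavy)"
    using finite_msgs decoded_subset finite_subset by blast
  show "finite (confusable m) \<and> card (confusable m) \<le> 4 * 2 ^ (4 * n)" if "m \<in> decoded - heavy" for m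
    using that by (auto simp: heavy_def confusable_def)
next
  fix m m' assume that: "m \<in> decoded - heavy" "m' \<in> decoded - heavy"
    "receiver1_view m = receiver1_view m'"
  then have ms: "m \<in> decoded" "m' \<in> decoded" "m \<in> msgs" "m' \<in> msgs"
    using decoded_subset by auto
  have same: "\<forall>k\<in>{1..15}. f k m = f k m'"
    using indices_eq_if_receiver1_view_eq[OF ms(3,4) that(3)] .
  have agree_1: "m 1 = m' 1"
    using decoded_agree_1[OF ms(1,2) that(3)] .
  have agree_4: "m 4 = m' 4"
    using that(3) by (simp add: receiver1_view_def)
  have "indices blind3 (m(2 := m' 2)) = indices blind3 m'"
    using indices_blind3_eq[OF msgs_upd_2[OF ms(3,4)] ms(4)] agree_1 agree_4 by simp
  also have "\<dots> = indices blind3 m"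
    using same by (intro indices_eqI) (simp add: blind3_def)
  finally show "m' 2 \<in> confusable m"
    using msgs_mem[OF ms(4), of 2] by (simp add: confusable_def)
  show "m = m'" if "m 2 = m' 2"
  proof -
    have "m 3 = m' 3"
      using decoded_agree[OF ms(1,2), of 3] same agree_1 that by (simp add: side_info_def)
    then show ?thesis
      using msgs_eqI[OF ms(3,4)] agree_1 agree_4 that by simp
  qed
qed

lemma card_light: "card (decoded - heavy) \<le> 4 * 2 ^ (18 * n) * msg_size 4"
proof -
  have "card (decoded - heavy) \<le> 4 * 2 ^ (4 * n) * (msg_size 4 * 2 ^ (14 * n))"
    using card_light_le_image card_receiver1_view_image[of "decoded - heavy"] decoded_subset
    by (meson Diff_subset le_trans mult_le_mono2 subset_trans)
  also have "\<dots> = 4 * 2 ^ (18 * n) * msg_size 4"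
    by (simp add: power_add[symmetric] mult_ac)
  finally show ?thesis .
qed

lemma msg_product_lt:
  assumes "err_prob 4 15 R n f g < 1/4"
  shows "msg_size 1 * msg_size 2 * msg_size 3 < 8 * 2 ^ (18 * n)"
proof -
  have "0 < card msgs"
    using msg_size_pos by (simp add: card_msgs)
  then have "4 * real (card (msgs - decoded)) < real (card msgs)"
    using assms by (simp add: err_prob_eq field_simps)
  then have "4 * card (msgs - decoded) < card msgs"
    by linarith
  moreover have "card (msgs - decoded) = card msgs - card decoded"
    using finite_msgs decoded_subset by (meson card_Diff_subset finite_subset)
  moreover have "card decoded \<le> card msgs"
    using finite_msgs decoded_subset by (rule card_mono)
  moreover have "card decoded \<le> card heavy + card (decoded - heavy)"
  proof -
    have "decoded = heavy \<union> (decoded - heavy)"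
      by (auto simp: heavy_def)
    then show ?thesis
      by (metis card_Un_le)
  qed
  ultimately have "msg_size 1 * msg_size 2 * msg_size 3 * msg_size 4 < 8 * 2 ^ (18 * n) * msg_size 4"
    using card_heavy card_light unfolding card_msgs by linarith
  then show ?thesis
    by (simp only: mult_less_cancel2)
qed

lemma rate_sum_bound:
  assumes "err_prob 4 15 R n f g < 1/4"
  shows "real n * (R 1 + R 2 + R 3) < 18 * real n + 3"
proof -
  have powr_le: "2 powr (real n * R j) \<le> real (msg_size j)" for j
    unfolding msg_size_def by linarith
  have "2 powr (real n * (R 1 + R 2 + R 3))
      = 2 powr (real n * R 1) * 2 powr (real n * R 2) * 2 powr (real n * R 3)"
    by (simp add: distrib_left powr_add)
  also have "\<dots> \<le> real (msg_size 1) * real (msg_size 2) * real (msg_size 3)"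
    by (intro mult_mono powr_le) simp_all
  also have "\<dots> < 8 * 2 ^ (18 * n)"
  proof -
    have "real (msg_size 1 * msg_size 2 * msg_size 3) < real (8 * 2 ^ (18 * n) :: nat)"
      using msg_product_lt[OF assms] by (simp only: of_nat_less_iff)
    then show ?thesis
      by simp
  qed
  also have "(8::real) * 2 ^ (18 * n) = 2 powr (18 * real n + 3)"
    by (simp add: powr_add powr_realpow[symmetric] mult.commute)
  finally show ?thesis
    by simp
qed

end

lemma le_if_eventually_linear_bound:
  fixes s a b :: real
  assumes "\<forall>\<^sub>F n in sequentially. real n * s < a * real n + b"
  shows "s \<le> a"
proof (rule ccontr)
  assume "\<not> s \<le> a"
  obtain n0 where n0: "\<And>n. n \<ge> n0 \<Longrightarrow> real n * s < a * real n + b"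
    using assms by (auto simp: eventually_sequentially)
  define n where "n = max n0 (nat \<lceil>b / (s - a)\<rceil>)"
  have "b / (s - a) \<le> real n"
    unfolding n_def by linarith
  then have "b \<le> real n * (s - a)"
    using \<open>\<not> s \<le> a\<close> by (simp add: field_simps)
  moreover have "real n * s < a * real n + b"
    by (rule n0) (simp add: n_def)
  ultimately show False
    by (simp add: algebra_simps)
qed

theorem mainTheorem5:
  fixes S :: "nat \<Rightarrow> nat set" and R :: "nat \<Rightarrow> real"
  assumes "bij_betw S {1..15} {T. T \<subseteq> {1..4} \<and> T \<noteq> {}}"
    and "achievable 4 15 S (\<lambda>k. 1)
           (\<lambda>j. if j = 1 then {4} else if j = 2 then {3,4} else if j = 3 then {1,2} else {2,3}) R"
  shows "R 1 + R 2 + R 3 \<le> 18"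
proof -
  obtain f g where code: "\<And>n. valid_code 4 15 S (\<lambda>k. 1) side_info R n (f n) (g n)"
    and err: "(\<lambda>n. err_prob 4 15 R n (f n) (g n)) \<longlonglongrightarrow> 0"
    using assms(2) unfolding achievable_def side_info_def by blast
  have "\<forall>\<^sub>F n in sequentially. err_prob 4 15 R n (f n) (g n) < 1/4"
    using err by (rule order_tendstoD) simp
  then have "\<forall>\<^sub>F n in sequentially. real n * (R 1 + R 2 + R 3) < 18 * real n + 3"
  proof eventually_elim
    case (elim n)
    interpret full_senders_code S R n "f n" "g n"
      using assms(1) code by unfold_locales
    show ?case
      using elim by (rule rate_sum_bound)
  qed
  then show ?thesis
    by (rule le_if_eventually_linear_bound)
qed

end
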